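(* Let $M\ge1$ and $\mathbf a\in\mathcal A_M$. Then the sequence $\mathbf a^\infty$ is irreducible (as a sequence) if and only if the word $\mathbf a$ is irreducible (as a fundamental word).
   Context: Order and word operations. $\Omega_M=\{0,\dots,M\}^{\mathbb N}$ with lexicographic order and left shift $\sigma$; words are compared via $\mathbf c\prec\mathbf d$ iff $\mathbf c0^\infty\prec\mathbf d0^\infty$. For a word $c_1\dots c_k$: - $c_1\dots c_k^\pm=c_1\dots c_{k-1}(c_k\pm1)$, when defined; - $\overline{c_1\dots c_k}=(M-c_1)\dots(M-c_k)$, and $\overline{(c_i)}=(M-c_i)$. Irreducible sequences. Let $\mathbf V=\{(c_i)\in\Omega_M:\overline{(c_i)}\preceq\sigma^n((c_i))\preceq(c_i)\ \forall n\ge0\}$. A sequence $(a_i)\in\mathbf V$ is irreducible if for every $j\in\mathbb N$: whenever $a_j>0$ and $(a_1\dots a_j^-)^\infty\in\mathbf V$, we have $a_1\dots a_j(\overline{a_1\dots a_j}^+)^\infty\prec(a_i)$. Fundamental words. A word $a_1\dots a_m$ ($m\ge2$) is fundamental if $\overline{a_1\dots a_{m-i}}\preceq a_{i+1}\dots a_m\prec a_1\dots a_{m-i}$ for $1\le i<m$. When $M\ge2$, a letter $a_1$ is fundamental if $M-a_1\le a_1<M$. $\mathcal A_M$ is the set of fundamental words, and $\mathcal A_1$ is the case $M=1$. The graph. For $\mathbf a\in\mathcal A_M$, let $G$ have vertices Start, $A$, $B$ and edges - $e_0$: Start$\to A$, - $e_1$: $A\to B$, - $e_2$: $B\to B$,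 - $e_3$: $B\to A$, - $e_4$: $A\to A$. It carries two labelings: - $\mathcal L_{\mathbf a}$: $e_0,e_3\mapsto\mathbf a^+$; $e_1\mapsto\overline{\mathbf a^+}$; $e_2\mapsto\mathbf a$; $e_4\mapsto\overline{\mathbf a}$; - $\mathcal L^*$: $e_0,e_3,e_4\mapsto1$; $e_1,e_2\mapsto0$. Composition. For a path $e_{i_1}\dots e_{i_k}$ with $i_1=0$, let $\Phi_{\mathbf a}$ map $\mathcal L_{\mathbf a}(e_{i_1})\cdots\mathcal L_{\mathbf a}(e_{i_k})$ to $\mathcal L^*(e_{i_1}\dots e_{i_k})$. For $\mathbf d\in\mathcal A_1$, $\mathbf a\circ\mathbf d:=\Phi_{\mathbf a}^{-1}(\mathbf d)$. Irreducible words. $\mathbf a\in\mathcal A_M$ is irreducible if there are no $\mathbf c\in\mathcal A_M$, $\mathbf d\in\mathcal A_1$ with $\mathbf a=\mathbf c\circ\mathbf d$. *)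

theory Defs
  imports Main
begin

text \<open>Sequences (c_1 c_2 ...) are functions nat => nat, with index 0 holding c_1.
  Words are lists of naturals.\<close>

type_synonym seq = "nat \<Rightarrow> nat"
type_synonym word = "nat list"

definition in_Omega :: "nat \<Rightarrow> seq \<Rightarrow> bool" where
  "in_Omega M c \<longleftrightarrow> (\<forall>i. c i \<le> M)"

definition seq_less :: "seq \<Rightarrow> seq \<Rightarrow> bool" where
  "seq_less c d \<longleftrightarrow> (\<exists>n. (\<forall>i<n. c i = d i) \<and> c n < d n)"

definition seq_le :: "seq \<Rightarrow> seq \<Rightarrow> bool" where
  "seq_le c d \<longleftrightarrow> seq_less c d \<or> c = d"

definition shift :: "nat \<Rightarrow> seq \<Rightarrow> seq" where
  "shift n c = (\<lambda>i. c (i + n))"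

definition seq_bar :: "nat \<Rightarrow> seq \<Rightarrow> seq" where
  "seq_bar M c = (\<lambda>i. M - c i)"

definition word_bar :: "nat \<Rightarrow> word \<Rightarrow> word" where
  "word_bar M w = map (\<lambda>x. M - x) w"

definition word_plus :: "word \<Rightarrow> word" where
  "word_plus w = butlast w @ [last w + 1]"

definition word_minus :: "word \<Rightarrow> word" where
  "word_minus w = butlast w @ [last w - 1]"

definition pad0 :: "word \<Rightarrow> seq" where
  "pad0 w = (\<lambda>i. if i < length w then w ! i else 0)"

definition per :: "word \<Rightarrow> seq" where
  "per w = (\<lambda>i. w ! (i mod length w))"

definition prepend :: "word \<Rightarrow> seq \<Rightarrow> seq" where
  "prepend w c = (\<lambda>i. if i < length w then w ! i else c (i - length w))"

definition word_less :: "word \<Rightarrow> word \<Rightarrow> bool" where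
  "word_less c d \<longleftrightarrow> seq_less (pad0 c) (pad0 d)"

definition word_le :: "word \<Rightarrow> word \<Rightarrow> bool" where
  "word_le c d \<longleftrightarrow> seq_le (pad0 c) (pad0 d)"

definition pref :: "seq \<Rightarrow> nat \<Rightarrow> word" where
  "pref c j = map c [0..<j]"

definition in_V :: "nat \<Rightarrow> seq \<Rightarrow> bool" where
  "in_V M c \<longleftrightarrow> in_Omega M c \<and>
     (\<forall>n. seq_le (seq_bar M c) (shift n c) \<and> seq_le (shift n c) c)"

text \<open>Irreducible sequences; j ranges over positive integers (1-based).\<close>
definition irreducible_seq :: "nat \<Rightarrow> seq \<Rightarrow> bool" where
  "irreducible_seq M a \<longleftrightarrow> in_V M a \<and>
     (\<forall>j\<ge>1. (a (j - 1) > 0 \<and> in_V M (per (word_minus (pref a j)))) \<longrightarrow>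
        seq_less (prepend (pref a j) (per (word_plus (word_bar M (pref a j))))) a)"

definition fundamental :: "nat \<Rightarrow> word \<Rightarrow> bool" where
  "fundamental M w \<longleftrightarrow> (\<forall>x\<in>set w. x \<le> M) \<and>
     ((length w \<ge> 2 \<and>
        (\<forall>i. 1 \<le> i \<and> i < length w \<longrightarrow>
           word_le (word_bar M (take (length w - i) w)) (drop i w) \<and>
           word_less (drop i w) (take (length w - i) w)))
      \<or> (M \<ge> 2 \<and> length w = 1 \<and> M - hd w \<le> hd w \<and> hd w < M))"

text \<open>Composition a o d = Phi_a^{-1}(d) via the labelled graph G. The path is
  determined by its L*-label: from A, label 0 = e1 (to B), label 1 = e4 (to A);
  from B, label 0 = e2 (to B), label 1 = e3 (to A). The Boolean state says
  whether we are at vertex A. The first letter of d (which is 1) is e0.\<close>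
fun comp_aux :: "nat \<Rightarrow> word \<Rightarrow> bool \<Rightarrow> word \<Rightarrow> word" where
  "comp_aux M a st [] = []"
| "comp_aux M a True (x # xs) =
     (if x = 0 then word_bar M (word_plus a) @ comp_aux M a False xs
      else word_bar M a @ comp_aux M a True xs)"
| "comp_aux M a False (x # xs) =
     (if x = 0 then a @ comp_aux M a False xs
      else word_plus a @ comp_aux M a True xs)"

definition compose :: "nat \<Rightarrow> word \<Rightarrow> word \<Rightarrow> word" where
  "compose M a d = word_plus a @ comp_aux M a True (tl d)"

definition irreducible_word :: "nat \<Rightarrow> word \<Rightarrow> bool" where
  "irreducible_word M a \<longleftrightarrow> fundamental M a \<and>
     \<not> (\<exists>c d. fundamental M c \<and> fundamental 1 d \<and> a = compose M c d)"

end

(*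
  If a = c o d, then a starts with c^+, and since d has a 0 after its leading 1, the rest of the
  periodic sequence stays strictly below (\bar c)^infinity. Hence a^infinity < c^+ (\bar c)^infinity,
  which violates irreducibility at j = |c| because c^infinity lies in V.

  Conversely, if irreducibility of a^infinity fails at j, let c = (a_1 ... a_j)^-. Then c^infinity
  lies in V, which makes c fundamental, and c^infinity <= a^infinity <= c^+ (\bar c)^infinity.
  Cutting a^infinity into blocks of length j, every block is squeezed between two sequences that
  differ by one in their j-th letter only, so it is the label of an edge of the graph G for c:
  a^infinity is the image under Phi_c^-1 of an infinite path. Fundamentality of c forces j to
  divide |a|, so the path has period k = |a| / j; the order properties of a^infinity pass to its
  0-1 label sequence through the monotonicity of Phi_c^-1, which makes the first k labels a
  fundamental word d with a = c o d.
*)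

theory Submission
  imports Defs
begin

section \<open>Lexicographic comparison of prefixes\<close>

definition agree :: "nat \<Rightarrow> seq \<Rightarrow> seq \<Rightarrow> bool" where
  "agree n x y \<longleftrightarrow> (\<forall>i<n. x i = y i)"

definition prefix_less :: "nat \<Rightarrow> seq \<Rightarrow> seq \<Rightarrow> bool" where
  "prefix_less n x y \<longleftrightarrow> (\<exists>k<n. agree k x y \<and> x k < y k)"

definition prefix_le :: "nat \<Rightarrow> seq \<Rightarrow> seq \<Rightarrow> bool" where
  "prefix_le n x y \<longleftrightarrow> prefix_less n x y \<or> agree n x y"

lemma seq_less_iff_agree: "seq_less x y \<longleftrightarrow> (\<exists>k. agree k x y \<and> x k < y k)"
  by (simp add: seq_less_def agree_def)

lemma agree_sym: "agree n x y \<longleftrightarrow> agree n y x"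
  by (auto simp: agree_def)

lemma agree_mono: "agree n x y \<Longrightarrow> m \<le> n \<Longrightarrow> agree m x y"
  by (auto simp: agree_def)

lemma agree_refl: "agree n x x"
  by (simp add: agree_def)

lemma agree_trans: "agree n x y \<Longrightarrow> agree n y z \<Longrightarrow> agree n x z"
  by (auto simp: agree_def)

lemma prefix_less_imp_seq_less: "prefix_less n x y \<Longrightarrow> seq_less x y"
  by (auto simp: prefix_less_def seq_less_iff_agree)

lemma prefix_less_not_agree: "prefix_less n x y \<Longrightarrow> \<not> agree n x y"
  by (auto simp: prefix_less_def agree_def)

lemma prefix_less_cong:
  "prefix_less n x y \<Longrightarrow> agree n x x' \<Longrightarrow> agree n y y' \<Longrightarrow> prefix_less n x' y'"
  by (auto simp: prefix_less_def agree_def)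

lemma prefix_le_cong:
  "prefix_le n x y \<Longrightarrow> agree n x x' \<Longrightarrow> agree n y y' \<Longrightarrow> prefix_le n x' y'"
  unfolding prefix_le_def using prefix_less_cong by (auto simp: agree_def)

lemma prefix_less_not_prefix_le: "prefix_less n x y \<Longrightarrow> \<not> prefix_le n y x"
proof
  assume "prefix_less n x y" "prefix_le n y x"
  then obtain k where k: "k < n" "agree k x y" "x k < y k" by (auto simp: prefix_less_def)
  from \<open>prefix_le n y x\<close> show False
    unfolding prefix_le_def
  proof
    assume "prefix_less n y x"
    then obtain l where "l < n" "agree l y x" "y l < x l" by (auto simp: prefix_less_def)
    with k show False by (cases k l rule: linorder_cases) (auto simp: agree_def)
  qed (use k in \<open>auto simp: agree_def\<close>)
qed

lemma prefix_le_or_prefix_less: "prefix_le n x y \<or> prefix_less n y x"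
proof (cases "agree n x y")
  case False
  then have ex: "\<exists>i. i < n \<and> x i \<noteq> y i" by (auto simp: agree_def)
  define k where "k = (LEAST i. i < n \<and> x i \<noteq> y i)"
  have k: "k < n" "x k \<noteq> y k" using LeastI_ex[OF ex] unfolding k_def by auto
  have "agree k x y"
    unfolding agree_def
  proof (intro allI impI)
    fix i assume "i < k"
    then have "\<not> (i < n \<and> x i \<noteq> y i)" unfolding k_def by (rule not_less_Least)
    with \<open>i < k\<close> k(1) show "x i = y i" by simp
  qed
  with k show ?thesis
    by (auto simp: prefix_le_def prefix_less_def agree_sym intro: linorder_neqE_nat)
qed (simp add: prefix_le_def)

lemma prefix_le_mono:
  assumes "prefix_le n x y" "m \<le> n"
  shows "prefix_le m x y"
proof (cases "agree m x y")
  case False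
  with assms obtain k where "k < n" "agree k x y" "x k < y k"
    by (auto simp: prefix_le_def prefix_less_def dest: agree_mono)
  moreover from False \<open>agree k x y\<close> have "k < m"
    by (meson agree_mono not_le)
  ultimately show ?thesis by (auto simp: prefix_le_def prefix_less_def)
qed (simp add: prefix_le_def)

lemma prefix_le_Suc_imp_le: "agree m x y \<Longrightarrow> prefix_le (Suc m) x y \<Longrightarrow> x m \<le> y m"
  by (auto simp: prefix_le_def prefix_less_def agree_def less_Suc_eq)

lemma prefix_le_between:
  assumes xy: "prefix_le (Suc m) x y" and yz: "prefix_le (Suc m) y z"
    and xz: "agree m x z" "z m = x m + 1"
  shows "agree (Suc m) y x \<or> agree (Suc m) y z"
proof -
  have "agree m x y"
  proof (rule ccontr)
    assume "\<not> agree m x y"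
    with prefix_le_mono[OF xy, of m] have "prefix_less m x y"
      by (simp add: prefix_le_def)
    then have "prefix_less m z y"
      using prefix_less_cong[OF _ xz(1) agree_refl] by blast
    with prefix_le_mono[OF yz, of m] show False
      using prefix_less_not_prefix_le by auto
  qed
  moreover from this xz(1) have "agree m y z"
    by (auto simp: agree_def)
  ultimately have "x m \<le> y m" "y m \<le> z m"
    using prefix_le_Suc_imp_le xy yz by blast+
  with xz(2) have "y m = x m \<or> y m = z m"
    by linarith
  with \<open>agree m x y\<close> \<open>agree m y z\<close> show ?thesis
    by (auto simp: agree_def less_Suc_eq)
qed

lemma seq_less_irrefl: "\<not> seq_less x x"
  by (simp add: seq_less_def)

lemma seq_less_trans:
  assumes "seq_less x y" "seq_less y z"
  shows "seq_less x z"
proof -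
  from assms obtain k l where k: "agree k x y" "x k < y k" and l: "agree l y z" "y l < z l"
    by (auto simp: seq_less_iff_agree)
  show ?thesis
  proof (cases k l rule: linorder_cases)
    case less
    with k l show ?thesis by (auto simp: seq_less_iff_agree agree_def intro!: exI[of _ k])
  next
    case equal
    with k l show ?thesis by (auto simp: seq_less_iff_agree agree_def intro!: exI[of _ k])
  next
    case greater
    with k l show ?thesis by (auto simp: seq_less_iff_agree agree_def intro!: exI[of _ l])
  qed
qed

lemma seq_less_asym: "seq_less x y \<Longrightarrow> \<not> seq_less y x"
  using seq_less_trans seq_less_irrefl by blast

lemma seq_less_linear: "x \<noteq> y \<Longrightarrow> seq_less x y \<or> seq_less y x"
proof -
  assume "x \<noteq> y"
  then obtain i where "x i \<noteq> y i" by auto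
  then have "\<not> agree (Suc i) x y" by (auto simp: agree_def)
  then show ?thesis
    using prefix_le_or_prefix_less[of "Suc i" x y] prefix_less_imp_seq_less
    unfolding prefix_le_def by blast
qed

lemma seq_le_refl: "seq_le x x"
  by (simp add: seq_le_def)

lemma seq_le_trans: "seq_le x y \<Longrightarrow> seq_le y z \<Longrightarrow> seq_le x z"
  by (auto simp: seq_le_def intro: seq_less_trans)

lemma seq_le_antisym: "seq_le x y \<Longrightarrow> seq_le y x \<Longrightarrow> x = y"
  by (auto simp: seq_le_def dest: seq_less_asym)

lemma not_seq_less_iff_seq_le: "\<not> seq_less x y \<longleftrightarrow> seq_le y x"
  using seq_less_linear[of x y] seq_less_asym seq_less_irrefl by (auto simp: seq_le_def)

lemma seq_le_imp_not_less: "seq_le x y \<Longrightarrow> \<not> seq_less y x"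
  using not_seq_less_iff_seq_le by blast

lemma seq_less_imp_prefix_le: "seq_less x y \<Longrightarrow> prefix_le n x y"
  unfolding seq_less_iff_agree prefix_le_def prefix_less_def
  by (metis agree_mono linorder_not_le)

lemma seq_le_imp_prefix_le: "seq_le x y \<Longrightarrow> prefix_le n x y"
  using seq_less_imp_prefix_le by (auto simp: seq_le_def prefix_le_def agree_def)

lemma shift_shift [simp]: "shift m (shift n x) = shift (m + n) x"
  by (simp add: shift_def ac_simps)

lemma shift_0 [simp]: "shift 0 x = x"
  by (simp add: shift_def)

lemma shift_period_mod:
  assumes "shift h x = x"
  shows "shift n x = shift (n mod h) x"
proof -
  have "shift (t * h) x = x" for t
  proof (induction t)
    case (Suc t)
    have "shift (Suc t * h) x = shift (t * h) (shift h x)"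
      by (simp add: add.commute)
    with Suc assms show ?case by simp
  qed simp
  then show ?thesis
    by (metis mod_div_mult_eq shift_shift)
qed

lemma least_period_dvd:
  assumes k: "shift k x = x" and h: "0 < h" "shift h x = x"
  obtains p where "0 < p" "p \<le> h" "shift p x = x" "p dvd k"
proof -
  define p where "p = (LEAST p. 0 < p \<and> shift p x = x)"
  have p: "0 < p" "shift p x = x" and "p \<le> h"
    using LeastI[of "\<lambda>p. 0 < p \<and> shift p x = x" h]
      Least_le[of "\<lambda>p. 0 < p \<and> shift p x = x" h] h
    unfolding p_def by auto
  moreover have "k mod p = 0"
  proof (rule ccontr)
    assume "k mod p \<noteq> 0"
    moreover have "shift (k mod p) x = x"
      using shift_period_mod[OF p(2), of k] k by simp
    ultimately have "p \<le> k mod p"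
      unfolding p_def by (intro Least_le) simp
    with p(1) show False
      using mod_less_divisor[of p k] by linarith
  qed
  ultimately show ?thesis
    using that by (simp add: mod_0_imp_dvd)
qed

lemma agree_imp_shift_less_iff:
  assumes "agree n x y"
  shows "seq_less (shift n x) (shift n y) \<longleftrightarrow> seq_less x y"
proof
  assume "seq_less (shift n x) (shift n y)"
  then obtain k where k: "agree k (shift n x) (shift n y)" "x (k + n) < y (k + n)"
    by (auto simp: seq_less_iff_agree shift_def)
  have "agree (k + n) x y"
    unfolding agree_def
  proof (intro allI impI)
    fix i assume "i < k + n"
    then show "x i = y i"
      using assms k(1) spec[OF k(1)[unfolded agree_def], of "i - n"]
      by (cases "i < n") (auto simp: agree_def shift_def)
  qed
  with k(2) show "seq_less x y" by (auto simp: seq_less_iff_agree)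
next
  assume "seq_less x y"
  then obtain k where k: "agree k x y" "x k < y k" by (auto simp: seq_less_iff_agree)
  with assms have "n \<le> k" by (metis agree_def not_le order_less_irrefl)
  with k have "agree (k - n) (shift n x) (shift n y)" "shift n x (k - n) < shift n y (k - n)"
    by (auto simp: agree_def shift_def)
  then show "seq_less (shift n x) (shift n y)" by (auto simp: seq_less_iff_agree)
qed

lemma agree_imp_shift_eq_iff: "agree n x y \<Longrightarrow> shift n x = shift n y \<longleftrightarrow> x = y"
  unfolding agree_def shift_def fun_eq_iff
  by (metis add.commute le_add_diff_inverse not_le)

lemma agree_imp_shift_le_iff: "agree n x y \<Longrightarrow> seq_le (shift n x) (shift n y) \<longleftrightarrow> seq_le x y"
  unfolding seq_le_def using agree_imp_shift_less_iff agree_imp_shift_eq_iff by blast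

lemma shift_prepend [simp]: "length u = n \<Longrightarrow> shift n (prepend u x) = x"
  by (auto simp: shift_def prepend_def)

lemma prepend_append: "prepend (u @ v) x = prepend u (prepend v x)"
  by (auto simp: fun_eq_iff prepend_def nth_append)

lemma agree_prepend_pad0: "agree (length u) (prepend u x) (pad0 u)"
  by (simp add: agree_def prepend_def pad0_def)

lemma agree_prepend_prepend: "agree (length u) (prepend u x) (prepend u y)"
  by (simp add: agree_def prepend_def)

lemma seq_less_prepend_iff [simp]: "seq_less (prepend u x) (prepend u y) \<longleftrightarrow> seq_less x y"
  using agree_imp_shift_less_iff[OF agree_prepend_prepend, of u x y] by simp

lemma length_pref [simp]: "length (pref x n) = n"
  by (simp add: pref_def)

lemma nth_pref [simp]: "i < n \<Longrightarrow> pref x n ! i = x i"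
  by (simp add: pref_def)

lemma pref_eq_if_agree: "agree n x y \<Longrightarrow> pref x n = pref y n"
  by (simp add: agree_def pref_def)

lemma word_less_iff_prefix_less:
  assumes "length u = length v"
  shows "word_less u v \<longleftrightarrow> prefix_less (length u) (pad0 u) (pad0 v)"
proof
  assume "word_less u v"
  then obtain k where k: "agree k (pad0 u) (pad0 v)" "pad0 u k < pad0 v k"
    by (auto simp: word_less_def seq_less_iff_agree)
  then have "k < length u" using assms by (auto simp: pad0_def split: if_splits)
  with k show "prefix_less (length u) (pad0 u) (pad0 v)" by (auto simp: prefix_less_def)
qed (auto simp: word_less_def prefix_less_imp_seq_less)

lemma word_le_iff_prefix_le:
  assumes "length u = length v"
  shows "word_le u v \<longleftrightarrow> prefix_le (length u) (pad0 u) (pad0 v)"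
proof -
  have "pad0 u = pad0 v \<longleftrightarrow> agree (length u) (pad0 u) (pad0 v)"
    using assms by (auto simp: agree_def pad0_def fun_eq_iff)
  then show ?thesis
    using word_less_iff_prefix_less[OF assms]
    by (simp add: word_le_def seq_le_def prefix_le_def word_less_def)
qed

lemma length_word_bar [simp]: "length (word_bar M u) = length u"
  by (simp add: word_bar_def)

lemma nth_word_bar: "i < length u \<Longrightarrow> word_bar M u ! i = M - u ! i"
  by (simp add: word_bar_def)

lemma word_bar_word_bar: "\<forall>x\<in>set u. x \<le> M \<Longrightarrow> word_bar M (word_bar M u) = u"
  by (induction u) (auto simp: word_bar_def)

lemma word_bar_eq_Nil_iff [simp]: "word_bar M u = [] \<longleftrightarrow> u = []"
  by (simp add: word_bar_def)

lemma word_plus_not_Nil [simp]: "word_plus u \<noteq> []"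
  by (simp add: word_plus_def)

lemma butlast_word_plus [simp]: "butlast (word_plus u) = butlast u"
  by (simp add: word_plus_def)

lemma last_word_bar: "u \<noteq> [] \<Longrightarrow> last (word_bar M u) = M - last u"
  by (simp add: word_bar_def last_map)

lemma butlast_word_bar: "butlast (word_bar M u) = word_bar M (butlast u)"
  by (simp add: word_bar_def map_butlast)

lemma length_word_plus [simp]: "u \<noteq> [] \<Longrightarrow> length (word_plus u) = length u"
  by (cases u rule: rev_cases) (auto simp: word_plus_def)

lemma length_word_minus [simp]: "u \<noteq> [] \<Longrightarrow> length (word_minus u) = length u"
  by (cases u rule: rev_cases) (auto simp: word_minus_def)

lemma nth_word_plus:
  "i < length u \<Longrightarrow> word_plus u ! i = (if i = length u - 1 then u ! i + 1 else u ! i)"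
  by (cases u rule: rev_cases) (auto simp: word_plus_def nth_append)

lemma nth_word_minus:
  "i < length u \<Longrightarrow> word_minus u ! i = (if i = length u - 1 then u ! i - 1 else u ! i)"
  by (cases u rule: rev_cases) (auto simp: word_minus_def nth_append)

lemma word_minus_word_plus [simp]: "u \<noteq> [] \<Longrightarrow> word_minus (word_plus u) = u"
  by (cases u rule: rev_cases) (auto simp: word_plus_def word_minus_def)

lemma word_plus_word_minus: "u \<noteq> [] \<Longrightarrow> last u > 0 \<Longrightarrow> word_plus (word_minus u) = u"
  by (cases u rule: rev_cases) (auto simp: word_plus_def word_minus_def)

lemma agree_seq_bar: "agree n x y \<Longrightarrow> agree n (seq_bar M x) (seq_bar M y)"
  by (simp add: agree_def seq_bar_def)

lemma agree_pad0_word_bar: "agree (length u) (pad0 (word_bar M u)) (seq_bar M (pad0 u))"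
  by (simp add: agree_def pad0_def word_bar_def seq_bar_def)

lemma shift_seq_bar: "shift n (seq_bar M x) = seq_bar M (shift n x)"
  by (simp add: fun_eq_iff shift_def seq_bar_def)

lemma seq_bar_less:
  assumes "\<And>i. y i \<le> M" "seq_less x y"
  shows "seq_less (seq_bar M y) (seq_bar M x)"
proof -
  from assms(2) obtain k where "agree k x y" "x k < y k" by (auto simp: seq_less_iff_agree)
  with assms(1)[of k] show ?thesis
    by (auto simp: seq_less_iff_agree agree_def seq_bar_def intro!: exI[of _ k])
qed

lemma seq_bar_le: "(\<And>i. y i \<le> M) \<Longrightarrow> seq_le x y \<Longrightarrow> seq_le (seq_bar M y) (seq_bar M x)"
  using seq_bar_less by (auto simp: seq_le_def)

lemma per_le: "w \<noteq> [] \<Longrightarrow> \<forall>x\<in>set w. x \<le> M \<Longrightarrow> per w i \<le> M"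
  by (simp add: per_def)

lemma per_add_period: "n mod length w = 0 \<Longrightarrow> per w (i + n) = per w i"
  by (simp add: per_def mod_add_right_eq[symmetric])

lemma shift_per_mod: "shift n (per w) = shift (n mod length w) (per w)"
  by (auto simp: fun_eq_iff shift_def per_def mod_add_right_eq)

lemma shift_per_period: "n mod length w = 0 \<Longrightarrow> shift n (per w) = per w"
  using shift_per_mod[of n w] by simp

lemma prepend_per: "prepend w (per w) = per w"
  by (auto simp: fun_eq_iff prepend_def per_def le_mod_geq)

lemma agree_shift_per_drop: "i \<le> length w \<Longrightarrow> agree (length w - i) (shift i (per w)) (pad0 (drop i w))"
  by (auto simp: agree_def shift_def per_def pad0_def add.commute)

lemma agree_per_take: "n \<le> length w \<Longrightarrow> agree n (per w) (pad0 (take n w))"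
  by (auto simp: agree_def per_def pad0_def)

section \<open>Fundamental words\<close>

lemma fundamental_nonempty: "fundamental M w \<Longrightarrow> w \<noteq> []"
  by (auto simp: fundamental_def)

lemma fundamental_letters_le: "fundamental M w \<Longrightarrow> x \<in> set w \<Longrightarrow> x \<le> M"
  by (auto simp: fundamental_def)

lemma fundamental_singleton: "fundamental M [h] \<Longrightarrow> M - h \<le> h"
  by (simp add: fundamental_def)

lemma fundamental_conditions_iff_prefix:
  assumes "1 \<le> i" "i < length w"
  shows "word_le (word_bar M (take (length w - i) w)) (drop i w)
      \<longleftrightarrow> prefix_le (length w - i) (seq_bar M (per w)) (shift i (per w))"
    and "word_less (drop i w) (take (length w - i) w)
      \<longleftrightarrow> prefix_less (length w - i) (shift i (per w)) (per w)"
proof -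
  let ?u = "take (length w - i) w" and ?v = "drop i w"
  have "agree (length w - i) (pad0 (word_bar M ?u)) (seq_bar M (pad0 ?u))"
    using agree_pad0_word_bar[of ?u M] assms(2) by simp
  moreover have "agree (length w - i) (seq_bar M (pad0 ?u)) (seq_bar M (per w))"
    using agree_seq_bar[OF agree_per_take[of "length w - i" w]] by (simp add: agree_sym)
  ultimately have bar: "agree (length w - i) (pad0 (word_bar M ?u)) (seq_bar M (per w))"
    by (rule agree_trans)
  have v: "agree (length w - i) (pad0 ?v) (shift i (per w))"
    using agree_shift_per_drop[of i w] assms(2) by (simp add: agree_sym)
  have u: "agree (length w - i) (pad0 ?u) (per w)"
    using agree_per_take[of "length w - i" w] by (simp add: agree_sym)
  from assms(2) show "word_le (word_bar M ?u) ?v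
      \<longleftrightarrow> prefix_le (length w - i) (seq_bar M (per w)) (shift i (per w))"
    using prefix_le_cong[OF _ bar v] prefix_le_cong[OF _ bar[THEN agree_sym[THEN iffD1]]
        v[THEN agree_sym[THEN iffD1]]]
    by (auto simp: word_le_iff_prefix_le)
  from assms(2) show "word_less ?v ?u \<longleftrightarrow> prefix_less (length w - i) (shift i (per w)) (per w)"
    using prefix_less_cong[OF _ v u] prefix_less_cong[OF _ v[THEN agree_sym[THEN iffD1]]
        u[THEN agree_sym[THEN iffD1]]]
    by (auto simp: word_less_iff_prefix_less)
qed

lemma fundamental_long_iff:
  assumes "2 \<le> length w"
  shows "fundamental M w \<longleftrightarrow> (\<forall>x\<in>set w. x \<le> M) \<and>
    (\<forall>i. 1 \<le> i \<and> i < length w \<longrightarrow>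
      prefix_le (length w - i) (seq_bar M (per w)) (shift i (per w)) \<and>
      prefix_less (length w - i) (shift i (per w)) (per w))"
  using assms fundamental_conditions_iff_prefix by (auto simp: fundamental_def)

lemma fundamentalD:
  assumes "fundamental M w" "1 \<le> i" "i < length w"
  shows "prefix_le (length w - i) (seq_bar M (per w)) (shift i (per w))"
    and "prefix_less (length w - i) (shift i (per w)) (per w)"
  using assms fundamental_long_iff[of w M] by auto

definition below_bar_at :: "nat \<Rightarrow> seq \<Rightarrow> nat \<Rightarrow> nat \<Rightarrow> bool" where
  "below_bar_at M x n k \<longleftrightarrow> agree k (shift n x) (seq_bar M x) \<and> shift n x k < seq_bar M x k"

lemma seq_bar_le_shift_iff: "seq_le (seq_bar M x) (shift n x) \<longleftrightarrow> (\<forall>k. \<not> below_bar_at M x n k)"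
  by (auto simp: below_bar_at_def seq_less_iff_agree agree_sym simp flip: not_seq_less_iff_seq_le)

lemma below_bar_at_shift_period:
  assumes le_M: "\<And>t. x t \<le> M" and period: "shift (n + r) x = x"
    and below: "below_bar_at M x n k" and "r \<le> k"
  shows "below_bar_at M x r (k - r)"
proof -
  have shift_back: "shift n x (t + r) = x t" for t
    using fun_cong[OF period, of t] by (simp add: shift_def ac_simps)
  have "shift r x t = seq_bar M x t" if "t < k - r" for t
  proof -
    from that below have "shift n x (t + r) = seq_bar M x (t + r)"
      by (simp add: below_bar_at_def agree_def)
    with le_M[of t] le_M[of "t + r"] show ?thesis
      unfolding shift_back by (simp add: seq_bar_def shift_def)
  qed
  moreover have "shift r x (k - r) < seq_bar M x (k - r)"
  proof -
    have "x (k - r) < M - x k"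
      using below shift_back[of "k - r"] \<open>r \<le> k\<close>
      by (simp add: below_bar_at_def seq_bar_def shift_def)
    then have "x k < M - x (k - r)"
      by linarith
    with \<open>r \<le> k\<close> show ?thesis
      by (simp add: seq_bar_def shift_def)
  qed
  ultimately show ?thesis
    by (simp add: below_bar_at_def agree_def)
qed

context
  fixes M :: nat and w :: word
  assumes fund: "fundamental M w"
begin

lemma per_fundamental_le: "per w i \<le> M"
  using per_le fundamental_nonempty[OF fund] fundamental_letters_le[OF fund] by blast

lemma shift_per_less: "n mod length w \<noteq> 0 \<Longrightarrow> seq_less (shift n (per w)) (per w)"
  using fundamentalD(2)[OF fund, of "n mod length w"] fundamental_nonempty[OF fund]
    shift_per_mod[of n w] prefix_less_imp_seq_less
  by (metis less_one linorder_not_le mod_less_divisor length_greater_0_conv)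

lemma below_bar_at_descent:
  assumes n: "n mod length w \<noteq> 0" and below: "below_bar_at M (per w) n k"
  shows "\<exists>k'<k. \<exists>n'. below_bar_at M (per w) n' k'"
proof -
  define i where "i = n mod length w"
  define r where "r = length w - i"
  have i: "1 \<le> i" "i < length w"
    using n fundamental_nonempty[OF fund] unfolding i_def by auto
  have shift_n: "shift n (per w) = shift i (per w)"
    using shift_per_mod[of n w] by (simp add: i_def)
  have "r \<le> k"
  proof (rule ccontr)
    assume "\<not> r \<le> k"
    with below have "prefix_less r (shift i (per w)) (seq_bar M (per w))"
      unfolding prefix_less_def below_bar_at_def shift_n by (intro exI[of _ k]) simp
    with fundamentalD(1)[OF fund i] show False
      by (simp add: prefix_less_not_prefix_le r_def)
  qed
  moreover have "shift (n + r) (per w) = per w"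
  proof (rule shift_per_period)
    have "n + r = n div length w * length w + length w"
      using div_mult_mod_eq[of n "length w"] i unfolding r_def i_def by linarith
    then show "(n + r) mod length w = 0"
      by simp
  qed
  ultimately have "below_bar_at M (per w) r (k - r)"
    using below_bar_at_shift_period[OF per_fundamental_le _ below] by blast
  moreover have "k - r < k"
    using i below \<open>r \<le> k\<close> unfolding r_def below_bar_at_def by (cases k) auto
  ultimately show ?thesis
    by blast
qed

lemma below_bar_at_period_imp_shift_one:
  assumes "2 \<le> length w" and n: "n mod length w = 0" and below: "below_bar_at M (per w) n k"
  shows "\<exists>k'\<le>k. below_bar_at M (per w) 1 k'"
proof -
  define x where "x = per w"
  from below have agr: "agree k x (seq_bar M x)" and lt: "x k < seq_bar M x k"
    using shift_per_period[OF n] by (simp_all add: below_bar_at_def x_def)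
  have "seq_less (shift 1 x) x"
    using shift_per_less assms(1) by (simp add: x_def)
  then obtain t where t: "agree t (shift 1 x) x" "shift 1 x t < x t"
    by (auto simp: seq_less_iff_agree)
  show ?thesis
  proof (cases "t < k")
    case True
    with agr t have "below_bar_at M x 1 t"
      by (auto simp: below_bar_at_def agree_def)
    with True show ?thesis by (auto simp: x_def intro: less_imp_le)
  next
    case False
    with agr t have "agree k (shift 1 x) (seq_bar M x)" "shift 1 x k \<le> x k"
      by (cases "t = k"; auto simp: agree_def)+
    with lt have "below_bar_at M x 1 k"
      by (simp add: below_bar_at_def)
    then show ?thesis by (auto simp: x_def)
  qed
qed

(* Induction on the position of a first drop below the reflection: a drop at a shift that is not
   a multiple of |w| moves to an earlier position when the shift is completed to a period. *)
lemma seq_bar_per_le_shift: "seq_le (seq_bar M (per w)) (shift n (per w))"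
proof -
  have "\<not> below_bar_at M (per w) n k" for n k
  proof (induction k arbitrary: n rule: less_induct)
    case (less k)
    show ?case
    proof
      assume below: "below_bar_at M (per w) n k"
      consider (single) h where "w = [h]" | (long) "2 \<le> length w"
        using fundamental_nonempty[OF fund] by (cases w rule: remdups_adj.cases) auto
      then show False
      proof cases
        case single
        with below fundamental_singleton[of M h] fund show False
          by (simp add: below_bar_at_def per_def shift_def seq_bar_def)
      next
        case long
        show False
        proof (cases "n mod length w = 0")
          case True
          obtain k' where "k' \<le> k" "below_bar_at M (per w) 1 k'"
            using below_bar_at_period_imp_shift_one[OF long True below] by blast
          with long less.IH show False
            using below_bar_at_descent[of 1 k'] by fastforce
        next
          case False
          with below less.IH show False
            using below_bar_at_descent by blast
        qed
      qed
    qed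
  qed
  then show ?thesis by (simp add: seq_bar_le_shift_iff)
qed

lemma per_fundamental_in_V: "in_V M (per w)"
proof -
  have "seq_le (shift n (per w)) (per w)" for n
    using shift_per_less[of n] shift_per_period[of n w] by (cases "n mod length w = 0") (auto simp: seq_le_def)
  then show ?thesis
    using seq_bar_per_le_shift per_fundamental_le by (simp add: in_V_def in_Omega_def)
qed

end

lemma fundamental_last_less:
  assumes fund: "fundamental M c"
  shows "last c < M"
proof (cases "length c = 1")
  case True
  with fund show ?thesis
    by (auto simp: fundamental_def length_Suc_conv)
next
  case False
  with fundamental_nonempty[OF fund] have "2 \<le> length c"
    by (cases c) (auto simp: Suc_le_eq)
  then have "prefix_less 1 (shift (length c - 1) (per c)) (per c)"
    using fundamentalD(2)[OF fund, of "length c - 1"] by simp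
  then have "c ! (length c - 1) < c ! 0"
    using \<open>2 \<le> length c\<close> by (simp add: prefix_less_def shift_def per_def)
  moreover have "c ! 0 \<le> M"
    using fundamental_letters_le[OF fund] fundamental_nonempty[OF fund] by simp
  ultimately show ?thesis
    using fundamental_nonempty[OF fund] by (simp add: last_conv_nth)
qed

context
  fixes M :: nat and c :: word
  assumes fund: "fundamental M c"
begin

lemma fundamental_no_bar_plus_overlap:
  assumes i: "1 \<le> i" "i < length c"
    and overlap: "\<And>t. t < length c - i \<Longrightarrow> word_plus c ! (i + t) = M - c ! t"
  shows False
proof -
  have "prefix_less (length c - i) (shift i (per c)) (seq_bar M (per c))"
    unfolding prefix_less_def
  proof (intro exI[of _ "length c - i - 1"] conjI)
    show "agree (length c - i - 1) (shift i (per c)) (seq_bar M (per c))"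
      unfolding agree_def
    proof (intro allI impI)
      fix t assume "t < length c - i - 1"
      with i have "t < length c - i" "i + t < length c" "i + t \<noteq> length c - 1"
        by linarith+
      with overlap[of t] have "c ! (i + t) = M - c ! t"
        by (simp add: nth_word_plus)
      with \<open>t < length c - i - 1\<close> show "shift i (per c) t = seq_bar M (per c) t"
        by (simp add: shift_def per_def seq_bar_def add.commute)
    qed
    show "shift i (per c) (length c - i - 1) < seq_bar M (per c) (length c - i - 1)"
    proof -
      have "length c - i - 1 < length c - i" "i + (length c - i - 1) = length c - 1"
        using i by linarith+
      with overlap[of "length c - i - 1"] i have "c ! (length c - 1) + 1 = M - c ! (length c - i - 1)"
        by (simp add: nth_word_plus)
      with i show ?thesis
        by (simp add: shift_def per_def seq_bar_def)
    qed
  qed (use i in simp)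
  with fundamentalD(1)[OF fund i] show False
    by (simp add: prefix_less_not_prefix_le)
qed

lemma fundamental_no_self_overlap:
  assumes i: "1 \<le> i" "i < length c" and overlap: "\<And>t. t < length c - i \<Longrightarrow> c ! (i + t) = c ! t"
  shows False
proof -
  have "agree (length c - i) (shift i (per c)) (per c)"
    using i overlap by (auto simp: agree_def shift_def per_def add.commute)
  with fundamentalD(2)[OF fund i] show False
    by (simp add: prefix_less_not_agree)
qed

lemma fundamental_butlast_ne_bar:
  assumes long: "2 \<le> length c"
  shows "butlast c \<noteq> butlast (word_bar M c)"
proof
  assume eq: "butlast c = butlast (word_bar M c)"
  have "c ! i = M - c ! i" if "i < length c - 1" for i
    using arg_cong[OF eq, of "\<lambda>u. u ! i"] that by (simp add: nth_butlast nth_word_bar)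
  then have "agree (length c - 1) (seq_bar M (per c)) (per c)"
    by (auto simp: agree_def seq_bar_def per_def)
  with fundamentalD[OF fund, of 1] long show False
    by (auto dest: prefix_le_cong[OF _ _ agree_refl] simp: prefix_less_not_prefix_le)
qed

lemma fundamental_block_words_distinct:
  shows "c \<noteq> word_plus c" and "word_bar M c \<noteq> word_bar M (word_plus c)"
    and "word_plus c \<noteq> word_bar M c" and "word_plus c \<noteq> word_bar M (word_plus c)"
    and "2 \<le> length c \<Longrightarrow> c \<noteq> word_bar M c"
proof -
  have ne: "c \<noteq> []" and last: "last c < M"
    using fundamental_nonempty[OF fund] fundamental_last_less[OF fund] .
  have last_plus: "last (word_plus c) = last c + 1"
    by (simp add: word_plus_def)
  then show "c \<noteq> word_plus c"
    by (metis n_not_Suc_n Suc_eq_plus1)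
  show "word_bar M c \<noteq> word_bar M (word_plus c)"
  proof
    assume "word_bar M c = word_bar M (word_plus c)"
    then have "last (word_bar M c) = last (word_bar M (word_plus c))"
      by simp
    with ne last last_plus show False
      by (simp add: last_word_bar)
  qed
  show "2 \<le> length c \<Longrightarrow> c \<noteq> word_bar M c"
    using fundamental_butlast_ne_bar by auto
  have "word_plus c \<notin> {word_bar M c, word_bar M (word_plus c)}"
  proof (cases "2 \<le> length c")
    case True
    then have "butlast (word_plus c) \<noteq> butlast (word_bar M c)"
      "butlast (word_plus c) \<noteq> butlast (word_bar M (word_plus c))"
      using fundamental_butlast_ne_bar by (simp_all add: butlast_word_bar)
    then show ?thesis
      by (metis insert_iff empty_iff)
  next
    case False
    with ne obtain h where "c = [h]"
      by (cases c) (auto simp: Suc_le_eq)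
    with fund last show ?thesis
      using fundamental_singleton[of M h] by (auto simp: word_plus_def word_bar_def)
  qed
  then show "word_plus c \<noteq> word_bar M c" "word_plus c \<noteq> word_bar M (word_plus c)"
    by auto
qed

end

section \<open>Composed words are not irreducible\<close>

lemma fundamental_one_zero_in_tl:
  assumes fund: "fundamental 1 d"
  shows "0 \<in> set (tl d)"
proof -
  have "2 \<le> length d"
    using fund by (auto simp: fundamental_def)
  then obtain k where k: "k < length d - 1" "per d (k + 1) < per d k"
    using fundamentalD(2)[OF fund, of 1] by (auto simp: prefix_less_def shift_def)
  moreover have "per d k \<le> 1"
    using per_fundamental_le[OF fund] .
  ultimately have "tl d ! k = 0"
    by (simp add: per_def nth_tl)
  with k(1) show ?thesis
    by (metis length_tl nth_mem)
qed

lemma comp_aux_below_per_word_bar: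
  assumes ne: "c \<noteq> []" and last: "last c < M" and zero: "0 \<in> set xs"
  shows "seq_less (prepend (comp_aux M c True xs) y) (per (word_bar M c))"
  using zero
proof (induction xs arbitrary: y)
  case (Cons x xs)
  have per_bar: "per (word_bar M c) = prepend (word_bar M c) (per (word_bar M c))"
    by (simp add: prepend_per)
  show ?case
  proof (cases "x = 0")
    case True
    have "prefix_less (length c) (pad0 (word_bar M (word_plus c))) (pad0 (word_bar M c))"
      unfolding prefix_less_def using ne last
      by (intro exI[of _ "length c - 1"])
        (auto simp: agree_def pad0_def nth_word_plus nth_word_bar last_conv_nth)
    then have "prefix_less (length c)
        (prepend (word_bar M (word_plus c)) (prepend (comp_aux M c False xs) y))
        (prepend (word_bar M c) (per (word_bar M c)))"
      using ne agree_prepend_pad0[of "word_bar M (word_plus c)"] agree_prepend_pad0[of "word_bar M c"]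
      by (auto simp: agree_sym elim: prefix_less_cong)
    then have "seq_less (prepend (word_bar M (word_plus c)) (prepend (comp_aux M c False xs) y))
        (prepend (word_bar M c) (per (word_bar M c)))"
      by (rule prefix_less_imp_seq_less)
    with True show ?thesis
      by (simp flip: per_bar add: prepend_append)
  next
    case False
    with Cons have "seq_less (prepend (comp_aux M c True xs) y) (per (word_bar M c))"
      by simp
    then have "seq_less (prepend (word_bar M c) (prepend (comp_aux M c True xs) y))
        (prepend (word_bar M c) (per (word_bar M c)))"
      by simp
    with False show ?thesis
      by (simp flip: per_bar add: prepend_append)
  qed
qed simp

lemma pref_per_compose: "c \<noteq> [] \<Longrightarrow> pref (per (compose M c d)) (length c) = word_plus c"
  by (intro nth_equalityI) (auto simp: compose_def per_def nth_append)

lemma per_compose_below: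
  assumes fc: "fundamental M c" and fd: "fundamental 1 d"
  shows "seq_less (per (compose M c d)) (prepend (word_plus c) (per (word_bar M c)))"
proof -
  define rest where "rest = comp_aux M c True (tl d)"
  have per_a: "per (compose M c d) = prepend (word_plus c) (prepend rest (per (compose M c d)))"
    using prepend_per[of "compose M c d"] by (simp add: compose_def rest_def prepend_append)
  have "seq_less (prepend rest (per (compose M c d))) (per (word_bar M c))"
    unfolding rest_def using fundamental_nonempty[OF fc] fundamental_last_less[OF fc]
    by (rule comp_aux_below_per_word_bar[OF _ _ fundamental_one_zero_in_tl[OF fd]])
  then have "seq_less (prepend (word_plus c) (prepend rest (per (compose M c d))))
      (prepend (word_plus c) (per (word_bar M c)))"
    by simp
  then show ?thesis
    unfolding per_a[symmetric] .
qed

theorem compose_not_irreducible_seq: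
  assumes fc: "fundamental M c" and fd: "fundamental 1 d"
  shows "\<not> irreducible_seq M (per (compose M c d))"
proof
  assume irr: "irreducible_seq M (per (compose M c d))"
  define x where "x = per (compose M c d)"
  have ne: "c \<noteq> []" and last: "last c < M"
    using fundamental_nonempty[OF fc] fundamental_last_less[OF fc] .
  have pref: "pref x (length c) = word_plus c"
    using pref_per_compose[OF ne] by (simp add: x_def)
  have "x (length c - 1) = word_plus c ! (length c - 1)"
    using ne nth_pref[of "length c - 1" "length c" x] by (simp add: pref)
  then have "0 < x (length c - 1)"
    using ne by (simp add: nth_word_plus)
  moreover have "in_V M (per (word_minus (pref x (length c))))"
    using per_fundamental_in_V[OF fc] ne by (simp add: pref)
  moreover have "1 \<le> length c"
    using ne by (simp add: Suc_le_eq)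
  ultimately have "seq_less (prepend (word_plus c) (per (word_plus (word_bar M (word_plus c))))) x"
    using irr unfolding irreducible_seq_def x_def[symmetric] pref[symmetric] by blast
  moreover have "word_plus (word_bar M (word_plus c)) = word_bar M c"
    using ne last by (intro nth_equalityI) (auto simp: nth_word_plus nth_word_bar last_conv_nth)
  ultimately show False
    using per_compose_below[OF fc fd] seq_less_asym by (simp add: x_def)
qed

section \<open>Infinite paths in the graph G\<close>

(* Phi_inv M c s x is the inverse of Phi_c on the infinite path of G that starts at A (s = True)
   or B and has L*-labels x. The vertex reached by an edge is A exactly when its L*-label is 1;
   Start behaves like B, as e0 and e3 carry the same labels. *)
definition edge_label :: "nat \<Rightarrow> word \<Rightarrow> bool \<Rightarrow> bool \<Rightarrow> word" where
  "edge_label M c from_A b =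
     (if from_A then (if b then word_bar M c else word_bar M (word_plus c))
      else (if b then word_plus c else c))"

definition vertex_at :: "bool \<Rightarrow> (nat \<Rightarrow> bool) \<Rightarrow> nat \<Rightarrow> bool" where
  "vertex_at s x m = (if m = 0 then s else x (m - 1))"

definition Phi_inv :: "nat \<Rightarrow> word \<Rightarrow> bool \<Rightarrow> (nat \<Rightarrow> bool) \<Rightarrow> seq" where
  "Phi_inv M c s x p =
     edge_label M c (vertex_at s x (p div length c)) (x (p div length c)) ! (p mod length c)"

definition bit_seq :: "(nat \<Rightarrow> bool) \<Rightarrow> seq" where
  "bit_seq x = (\<lambda>i. if x i then 1 else 0)"

lemma bit_seq_inject: "bit_seq x = bit_seq y \<Longrightarrow> x = y"
  by (auto simp: bit_seq_def fun_eq_iff split: if_splits)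

lemma shift_bit_seq: "shift m (bit_seq x) = bit_seq (\<lambda>i. x (i + m))"
  by (simp add: bit_seq_def shift_def)

lemma bit_seq_Not: "bit_seq (\<lambda>i. \<not> x i) = seq_bar 1 (bit_seq x)"
  by (simp add: bit_seq_def seq_bar_def fun_eq_iff)

lemma length_edge_label [simp]: "c \<noteq> [] \<Longrightarrow> length (edge_label M c s b) = length c"
  by (simp add: edge_label_def)

lemma comp_aux_Cons:
  "comp_aux M c s (x # xs) = edge_label M c s (x \<noteq> 0) @ comp_aux M c (x \<noteq> 0) xs"
  by (cases s) (simp_all add: edge_label_def)

lemma Phi_inv_block:
  assumes "r < length c"
  shows "Phi_inv M c s x (m * length c + r) = edge_label M c (vertex_at s x m) (x m) ! r"
proof -
  from assms have "length c \<noteq> 0" by linarith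
  with assms have "(m * length c + r) div length c = m" "(m * length c + r) mod length c = r"
    by (simp_all add: add.commute[of "m * length c"])
  then show ?thesis by (simp add: Phi_inv_def)
qed

lemma shift_Phi_inv:
  assumes "c \<noteq> []"
  shows "shift (m * length c) (Phi_inv M c s x) = Phi_inv M c (vertex_at s x m) (\<lambda>i. x (i + m))"
proof
  fix p
  have "(p + m * length c) div length c = p div length c + m"
    "(p + m * length c) mod length c = p mod length c"
    using assms by simp_all
  then show "shift (m * length c) (Phi_inv M c s x) p
      = Phi_inv M c (vertex_at s x m) (\<lambda>i. x (i + m)) p"
    by (simp add: shift_def Phi_inv_def vertex_at_def add.commute)
qed

lemma seq_bar_Phi_inv:
  assumes ne: "c \<noteq> []" and last: "last c < M" and le: "\<forall>x\<in>set c. x \<le> M"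
  shows "seq_bar M (Phi_inv M c s x) = Phi_inv M c (\<not> s) (\<lambda>i. \<not> x i)"
proof
  fix p
  have "\<forall>x\<in>set (word_plus c). x \<le> M"
    using le last ne by (auto simp: word_plus_def dest: in_set_butlastD)
  with le have "word_bar M (edge_label M c s b) = edge_label M c (\<not> s) (\<not> b)" for s b
    by (auto simp: edge_label_def word_bar_word_bar)
  moreover have "p mod length c < length c"
    using ne by simp
  ultimately show "seq_bar M (Phi_inv M c s x) p = Phi_inv M c (\<not> s) (\<lambda>i. \<not> x i) p"
    using ne by (simp add: seq_bar_def Phi_inv_def vertex_at_def flip: nth_word_bar)
qed

lemma edge_label_False_True:
  assumes "c \<noteq> []" "last c < M"
  shows "r < length c - 1 \<Longrightarrow> edge_label M c s False ! r = edge_label M c s True ! r"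
    and "edge_label M c s False ! (length c - 1) < edge_label M c s True ! (length c - 1)"
  using assms by (auto simp: edge_label_def nth_word_bar nth_word_plus last_conv_nth)

lemma Phi_inv_agree:
  assumes "\<And>i. i < n \<Longrightarrow> x i = y i"
  shows "agree (n * length c) (Phi_inv M c s x) (Phi_inv M c s y)"
  unfolding agree_def
proof (intro allI impI)
  fix p assume "p < n * length c"
  then have "p div length c < n"
    by (simp add: less_mult_imp_div_less)
  with assms show "Phi_inv M c s x p = Phi_inv M c s y p"
    by (simp add: Phi_inv_def vertex_at_def)
qed

lemma Phi_inv_less_first_block:
  assumes ne: "c \<noteq> []" and last: "last c < M" and "\<not> x 0" "y 0"
  shows "seq_less (Phi_inv M c s x) (Phi_inv M c s y)"
proof -
  have "agree (length c - 1) (Phi_inv M c s x) (Phi_inv M c s y)"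
    using assms Phi_inv_block[of _ c M s _ 0] edge_label_False_True(1)[OF ne last]
    by (simp add: agree_def vertex_at_def)
  moreover have "Phi_inv M c s x (length c - 1) < Phi_inv M c s y (length c - 1)"
    using assms Phi_inv_block[of "length c - 1" c M s _ 0] edge_label_False_True(2)[OF ne last]
    by (simp add: vertex_at_def)
  ultimately show ?thesis
    by (auto simp: seq_less_iff_agree)
qed

lemma Phi_inv_less:
  assumes ne: "c \<noteq> []" and last: "last c < M" and less: "seq_less (bit_seq x) (bit_seq y)"
  shows "seq_less (Phi_inv M c s x) (Phi_inv M c s y)"
proof -
  from less obtain n where "agree n (bit_seq x) (bit_seq y)" "bit_seq x n < bit_seq y n"
    by (auto simp: seq_less_iff_agree)
  then have before: "\<And>i. i < n \<Longrightarrow> x i = y i" and at: "\<not> x n" "y n"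
    by (auto simp: agree_def bit_seq_def split: if_splits)
  have "vertex_at s x n = vertex_at s y n"
    using before by (simp add: vertex_at_def)
  with Phi_inv_less_first_block[OF ne last, of "\<lambda>i. x (i + n)" "\<lambda>i. y (i + n)"] at
  have "seq_less (shift (n * length c) (Phi_inv M c s x)) (shift (n * length c) (Phi_inv M c s y))"
    by (simp add: shift_Phi_inv[OF ne])
  with Phi_inv_agree[OF before] show ?thesis
    by (simp add: agree_imp_shift_less_iff)
qed

lemma Phi_inv_le_imp_bit_seq_le:
  assumes "c \<noteq> []" "last c < M" "seq_le (Phi_inv M c s x) (Phi_inv M c s y)"
  shows "seq_le (bit_seq x) (bit_seq y)"
  using assms Phi_inv_less[of c M y x s] by (auto simp flip: not_seq_less_iff_seq_le)

section \<open>Decomposition at a failure of irreducibility\<close>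

(* A position j at which the irreducibility condition for a^infinity fails; in the failed
   inequality "above", the word (\bar w)^+ is written as \bar (w^-). *)
locale irreducibility_violation =
  fixes M :: nat and a :: word and j :: nat
  assumes fund_a: "fundamental M a" and j_pos: "0 < j"
    and last_pos: "0 < per a (j - 1)"
    and minus_in_V: "in_V M (per (word_minus (pref (per a) j)))"
    and above: "seq_le (per a)
      (prepend (pref (per a) j) (per (word_bar M (word_minus (pref (per a) j)))))"
begin

definition "A = per a"
definition "c_plus = pref A j"
definition "c = word_minus c_plus"
definition "C = per c"
definition "c_bar = word_bar M c"
definition "c_plus_bar = word_bar M c_plus"
definition "L = length a"

lemma a_ne: "a \<noteq> []"
  using fundamental_nonempty[OF fund_a] .

lemma A_le_M: "A i \<le> M"
  using per_fundamental_le[OF fund_a] by (simp add: A_def)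

lemma shift_A_le: "seq_le (shift n A) A"
  using per_fundamental_in_V[OF fund_a] by (simp add: in_V_def A_def)

lemma seq_bar_A_le_shift: "seq_le (seq_bar M A) (shift n A)"
  using per_fundamental_in_V[OF fund_a] by (simp add: in_V_def A_def)

lemma shift_A_less: "n mod L \<noteq> 0 \<Longrightarrow> seq_less (shift n A) A"
  using shift_per_less[OF fund_a] by (simp add: A_def L_def)

lemma A_add_L: "A (i + L) = A i"
  using per_add_period[of L a i] by (simp add: A_def L_def)

lemma length_c_plus [simp]: "length c_plus = j"
  by (simp add: c_plus_def)

lemma c_plus_ne: "c_plus \<noteq> []"
  using j_pos length_c_plus by (metis length_0_conv less_irrefl)

lemma length_c [simp]: "length c = j"
  using c_plus_ne by (simp add: c_def)

lemma c_ne: "c \<noteq> []"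
  using j_pos length_c by (metis length_0_conv less_irrefl)

lemma c_plus_nth: "i < j \<Longrightarrow> c_plus ! i = A i"
  by (simp add: c_plus_def)

lemma c_nth: "i < j \<Longrightarrow> c ! i = (if i = j - 1 then A i - 1 else A i)"
  using c_plus_ne by (simp add: c_def nth_word_minus c_plus_nth)

lemma c_plus_eq: "c_plus = word_plus c"
proof -
  have "last c_plus = A (j - 1)"
    using c_plus_ne j_pos by (simp add: last_conv_nth c_plus_nth)
  with last_pos have "0 < last c_plus"
    by (simp add: A_def)
  then show ?thesis
    using word_plus_word_minus[OF c_plus_ne] by (simp add: c_def)
qed

lemma c_le_M: "\<forall>x\<in>set c. x \<le> M"
proof -
  have "c ! i \<le> M" if "i < j" for i
    using that A_le_M[of i] by (cases "i = j - 1") (simp_all add: c_nth)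
  then show ?thesis
    by (auto simp: in_set_conv_nth)
qed

lemma last_c_less: "last c < M"
  using last_pos A_le_M[of "j - 1"] j_pos c_ne by (simp add: last_conv_nth c_nth A_def)

lemma C_nth: "i < j \<Longrightarrow> C i = c ! i"
  by (simp add: C_def per_def)

lemma C_in_V: "in_V M C"
  using minus_in_V by (simp add: C_def c_def c_plus_def A_def)

lemma A_le_c_plus_c_bar: "seq_le A (prepend c_plus (per c_bar))"
  using above by (simp add: A_def c_plus_def c_def c_bar_def)

lemma agree_C_A: "agree (j - 1) C A"
  by (auto simp: agree_def C_nth c_nth)

lemma A_last_eq: "A (j - 1) = C (j - 1) + 1"
  using last_pos j_pos by (simp add: C_nth c_nth A_def)

(* A agrees with C except that its j-th letter is one larger, so a self-overlap of c would
   push a shift of A above A. *)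
lemma shift_C_not_agree:
  assumes i: "1 \<le> i" "i < j"
  shows "\<not> agree (j - i) (shift i C) C"
proof
  assume agr: "agree (j - i) (shift i C) C"
  have "prefix_less (j - i) A (shift i A)"
    unfolding prefix_less_def
  proof (intro exI[of _ "j - i - 1"] conjI)
    show "agree (j - i - 1) A (shift i A)"
      unfolding agree_def
    proof (intro allI impI)
      fix t assume "t < j - i - 1"
      with i have "t < j - 1" "t + i < j - 1" "t < j - i" by linarith+
      then have "A t = C t" "C (t + i) = C t" "A (t + i) = C (t + i)"
        using agree_C_A agr by (auto simp: agree_def shift_def)
      then show "A t = shift i A t"
        by (simp add: shift_def)
    qed
    show "A (j - i - 1) < shift i A (j - i - 1)"
      using agr[unfolded agree_def, rule_format, of "j - i - 1"] agree_C_A A_last_eq i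
      by (auto simp: agree_def shift_def)
  qed (use i in simp)
  then show False
    using shift_A_le seq_le_imp_not_less prefix_less_imp_seq_less by blast
qed

lemma c_fundamental: "fundamental M c"
proof (cases "j = 1")
  case True
  then obtain h where c: "c = [h]"
    using length_c by (cases c) auto
  have "seq_le (seq_bar M C) C"
    using C_in_V unfolding in_V_def by (metis shift_0)
  then have "prefix_le 1 (seq_bar M C) C"
    by (rule seq_le_imp_prefix_le)
  then have "M - h \<le> h"
    by (auto simp: c C_def per_def seq_bar_def prefix_le_def prefix_less_def agree_def)
  with last_c_less c show ?thesis
    by (simp add: fundamental_def)
next
  case False
  with j_pos have long: "2 \<le> length c" by simp
  have bar_le: "prefix_le (j - i) (seq_bar M C) (shift i C)"
    and shift_le: "prefix_le (j - i) (shift i C) C" for i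
    using C_in_V by (simp_all add: in_V_def seq_le_imp_prefix_le)
  have "prefix_less (j - i) (shift i C) C" if "1 \<le> i" "i < j" for i
    using shift_le[of i] shift_C_not_agree[OF that] by (simp add: prefix_le_def)
  with bar_le long c_le_M show ?thesis
    by (simp add: fundamental_long_iff C_def)
qed

definition "block m = pref (shift (m * j) A) j"

primrec at_A :: "nat \<Rightarrow> bool" where
  "at_A 0 = False"
| "at_A (Suc m) = (if at_A m then block m = c_bar else block m = c_plus)"

definition "label m = at_A (Suc m)"

definition "block_invariant m \<longleftrightarrow>
  (if at_A m then seq_le (shift (m * j) A) (per c_bar) else seq_le C (shift (m * j) A))"

lemma length_c_bar [simp]: "length c_bar = j"
  by (simp add: c_bar_def)

lemma shift_j_C: "shift j C = C"
  using shift_per_period[of j c] by (simp add: C_def)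

lemma shift_j_per_c_bar: "shift j (per c_bar) = per c_bar"
  using shift_per_period[of j c_bar] by simp

lemma seq_bar_per_c_bar: "seq_bar M (per c_bar) = C"
proof
  fix i
  have "i mod j < j"
    using j_pos by simp
  with c_le_M show "seq_bar M (per c_bar) i = C i"
    by (simp add: seq_bar_def per_def c_bar_def nth_word_bar C_def)
qed

lemma shift_j_A_le_per_c_bar: "seq_le (shift j A) (per c_bar)"
proof -
  have "agree j A (prepend c_plus (per c_bar))"
    by (simp add: agree_def prepend_def c_plus_nth)
  with A_le_c_plus_c_bar show ?thesis
    using agree_imp_shift_le_iff[of j A "prepend c_plus (per c_bar)"] by simp
qed

lemma C_le_seq_bar_shift_j_A: "seq_le C (seq_bar M (shift j A))"
proof -
  have "per c_bar i \<le> M" for i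
    using j_pos by (simp add: per_def c_bar_def nth_word_bar)
  then have "seq_le (seq_bar M (per c_bar)) (seq_bar M (shift j A))"
    using seq_bar_le[OF _ shift_j_A_le_per_c_bar] by blast
  then show ?thesis
    by (simp add: seq_bar_per_c_bar)
qed

lemma agree_seq_bar_A_per_c_bar: "agree (j - 1) (seq_bar M A) (per c_bar)"
  by (auto simp: agree_def seq_bar_def per_def c_bar_def nth_word_bar c_nth)

lemma per_c_bar_last_eq: "per c_bar (j - 1) = seq_bar M A (j - 1) + 1"
  using last_pos A_le_M[of "j - 1"] j_pos
  by (simp add: seq_bar_def per_def c_bar_def nth_word_bar c_nth A_def)

lemma pref_C: "pref C j = c"
  by (intro nth_equalityI) (simp_all add: C_nth)

lemma pref_per_c_bar: "pref (per c_bar) j = c_bar"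
  by (intro nth_equalityI) (simp_all add: per_def)

lemma pref_seq_bar_A: "pref (seq_bar M A) j = c_plus_bar"
  by (intro nth_equalityI) (simp_all add: seq_bar_def c_plus_bar_def nth_word_bar c_plus_nth)

(* The tail of A after m blocks is squeezed between two sequences that differ only in their j-th
   letter, by one; so the next block is one of the two edge labels leaving the current vertex. *)
lemma block_step_at_B:
  assumes B: "\<not> at_A m" and inv: "block_invariant m"
  shows "block m = edge_label M c False (label m) \<and> block_invariant (Suc m)"
proof -
  define X where "X = shift (m * j) A"
  have shift_X: "shift j X = shift (Suc m * j) A"
    by (simp add: X_def add.commute)
  have CX: "seq_le C X" and XA: "seq_le X A"
    using B inv shift_A_le by (simp_all add: block_invariant_def X_def)
  have "agree (Suc (j - 1)) X C \<or> agree (Suc (j - 1)) X A"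
    using prefix_le_between[OF seq_le_imp_prefix_le[OF CX] seq_le_imp_prefix_le[OF XA]]
      agree_C_A A_last_eq by blast
  then consider "agree j X C" | "agree j X A"
    using j_pos by fastforce
  then show ?thesis
  proof cases
    case 1
    then have "block m = c"
      using pref_eq_if_agree pref_C by (simp add: block_def X_def)
    moreover have "seq_le C (shift j X)"
      using agree_imp_shift_le_iff[OF 1[THEN agree_sym[THEN iffD1]]] CX shift_j_C by simp
    ultimately show ?thesis
      using B fundamental_block_words_distinct(1)[OF c_fundamental] c_plus_eq
      by (simp add: label_def edge_label_def block_invariant_def shift_X)
  next
    case 2
    then have "block m = c_plus"
      using pref_eq_if_agree by (simp add: block_def X_def c_plus_def)
    moreover have "seq_le (shift j X) (per c_bar)"
      using agree_imp_shift_le_iff[OF 2] XA shift_j_A_le_per_c_bar seq_le_trans by blast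
    ultimately show ?thesis
      using B c_plus_eq by (simp add: label_def edge_label_def block_invariant_def shift_X)
  qed
qed

lemma block_step_at_A:
  assumes at: "at_A m" and inv: "block_invariant m"
  shows "block m = edge_label M c True (label m) \<and> block_invariant (Suc m)"
proof -
  define X where "X = shift (m * j) A"
  have shift_X: "shift j X = shift (Suc m * j) A"
    by (simp add: X_def add.commute)
  have Xc: "seq_le X (per c_bar)" and AX: "seq_le (seq_bar M A) X"
    using at inv seq_bar_A_le_shift by (simp_all add: block_invariant_def X_def)
  have "agree (Suc (j - 1)) X (seq_bar M A) \<or> agree (Suc (j - 1)) X (per c_bar)"
    using prefix_le_between[OF seq_le_imp_prefix_le[OF AX] seq_le_imp_prefix_le[OF Xc]]
      agree_seq_bar_A_per_c_bar per_c_bar_last_eq by blast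
  then consider "agree j X (seq_bar M A)" | "agree j X (per c_bar)"
    using j_pos by fastforce
  then show ?thesis
  proof cases
    case 1
    then have "block m = c_plus_bar"
      using pref_eq_if_agree pref_seq_bar_A by (simp add: block_def X_def)
    moreover have "seq_le (seq_bar M (shift j A)) (shift j X)"
      using agree_imp_shift_le_iff[OF 1[THEN agree_sym[THEN iffD1]]] AX by (simp add: shift_seq_bar)
    with C_le_seq_bar_shift_j_A have "seq_le C (shift j X)"
      by (rule seq_le_trans)
    ultimately show ?thesis
      using at fundamental_block_words_distinct(2)[OF c_fundamental] c_plus_eq
      by (simp add: label_def edge_label_def block_invariant_def shift_X c_plus_bar_def c_bar_def)
  next
    case 2
    then have "block m = c_bar"
      using pref_eq_if_agree pref_per_c_bar by (simp add: block_def X_def)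
    moreover have "seq_le (shift j X) (per c_bar)"
      using agree_imp_shift_le_iff[OF 2] Xc shift_j_per_c_bar by simp
    ultimately show ?thesis
      using at by (simp add: label_def edge_label_def block_invariant_def shift_X c_bar_def)
  qed
qed

lemma block_invariant: "block_invariant m"
proof (induction m)
  case 0
  have "prefix_less j C A"
    unfolding prefix_less_def using agree_C_A A_last_eq j_pos
    by (intro exI[of _ "j - 1"]) auto
  then show ?case
    by (simp add: block_invariant_def seq_le_def prefix_less_imp_seq_less)
next
  case (Suc m)
  then show ?case
    using block_step_at_A block_step_at_B by blast
qed

lemma block_eq_edge_label: "block m = edge_label M c (at_A m) (label m)"
  using block_step_at_A block_step_at_B block_invariant by (cases "at_A m") auto

lemma vertex_at_label: "vertex_at False label m = at_A m"
  by (cases m) (simp_all add: vertex_at_def label_def)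

lemma A_eq_Phi_inv: "A = Phi_inv M c False label"
proof
  fix p
  define m where "m = p div j"
  define r where "r = p mod j"
  have "r < j" "p = r + m * j"
    using j_pos by (simp_all add: m_def r_def)
  then have "A p = block m ! r"
    by (simp add: block_def shift_def)
  also have "\<dots> = Phi_inv M c False label p"
    by (simp add: block_eq_edge_label Phi_inv_def m_def r_def vertex_at_label)
  finally show "A p = Phi_inv M c False label p" .
qed

lemma length_block [simp]: "length (block m) = j"
  by (simp add: block_def)

lemma block_nth: "r < j \<Longrightarrow> block m ! r = A (m * j + r)"
  by (simp add: block_def shift_def add.commute)

lemma block_0: "block 0 = c_plus"
  by (simp add: block_def c_plus_def)

lemma label_0: "label 0"
  by (simp add: label_def block_0)

lemma block_at_A: "at_A m \<Longrightarrow> block m = c_bar \<or> block m = c_plus_bar"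
  using block_eq_edge_label[of m] c_plus_eq
  by (auto simp: edge_label_def c_bar_def c_plus_bar_def)

lemma block_eq_c_plus: "block m = c_plus \<Longrightarrow> \<not> at_A m \<and> label m"
  using block_at_A[of m] fundamental_block_words_distinct(3,4)[OF c_fundamental] c_plus_eq
  by (auto simp: label_def c_bar_def c_plus_bar_def)

(* If j does not divide L, block L div j ends with a prefix of c and the next block starts with
   the matching suffix of c^+; since blocks are among c, c^+, \bar c, \bar c^+, this contradicts
   the fundamentality of c. *)
lemma block_wrap:
  assumes "\<not> j dvd L" "t < j - L mod j"
  shows "block (L div j) ! (L mod j + t) = c ! t"
proof -
  from assms(1) have "0 < L mod j"
    by (simp add: mod_greater_zero_iff_not_dvd)
  with assms(2) have t: "t < j" "t \<noteq> j - 1" "L mod j + t < j"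
    by linarith+
  have "L div j * j + (L mod j + t) = t + L"
    using div_mult_mod_eq[of L j] by linarith
  then have "block (L div j) ! (L mod j + t) = A (t + L)"
    using t by (simp only: block_nth)
  with t show ?thesis
    by (simp add: A_add_L c_nth)
qed

lemma block_after_wrap:
  assumes "\<not> j dvd L" "t < L mod j"
  shows "block (Suc (L div j)) ! t = c_plus ! (j - L mod j + t)"
proof -
  from assms(2) mod_less_divisor[OF j_pos, of L] have t: "t < j" "j - L mod j + t < j"
    by linarith+
  have "Suc (L div j) * j = L div j * j + j"
    by simp
  with div_mult_mod_eq[of L j] assms have "Suc (L div j) * j + t = (j - L mod j + t) + L"
    using mod_less_divisor[OF j_pos, of L] by linarith
  then have "block (Suc (L div j)) ! t = A ((j - L mod j + t) + L)"
    using t by (simp only: block_nth)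
  with t show ?thesis
    by (simp add: A_add_L c_plus_nth)
qed

lemma not_at_A_after_wrap:
  assumes not_dvd: "\<not> j dvd L"
  shows "\<not> at_A (Suc (L div j))"
proof
  assume at: "at_A (Suc (L div j))"
  define r where "r = L mod j"
  have r: "0 < r" "r < j"
    using not_dvd j_pos by (simp_all add: r_def mod_greater_zero_iff_not_dvd)
  show False
  proof (rule fundamental_no_bar_plus_overlap[OF c_fundamental, of "j - r"])
    show "1 \<le> j - r" "j - r < length c"
      using r by simp_all
    fix t assume "t < length c - (j - r)"
    with r have t: "t < r" "t \<noteq> j - 1"
      by simp_all
    have "block (Suc (L div j)) ! t = M - c ! t"
      using block_at_A[OF at] t r c_ne
      by (auto simp: c_bar_def c_plus_bar_def c_plus_eq nth_word_bar nth_word_plus)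
    with block_after_wrap[OF not_dvd, of t] t show "word_plus c ! (j - r + t) = M - c ! t"
      by (simp add: r_def c_plus_eq)
  qed
qed

lemma j_dvd_L: "j dvd L"
proof (rule ccontr)
  assume not_dvd: "\<not> j dvd L"
  define r where "r = L mod j"
  have r: "1 \<le> r" "r < length c"
    using not_dvd j_pos by (simp_all add: r_def mod_greater_zero_iff_not_dvd Suc_le_eq)
  have "\<not> label (L div j)"
    using not_at_A_after_wrap[OF not_dvd] by (simp add: label_def)
  then have "block (L div j) = edge_label M c (at_A (L div j)) False"
    using block_eq_edge_label by simp
  then consider "block (L div j) = c" | "block (L div j) = c_plus_bar"
    by (cases "at_A (L div j)") (simp_all add: edge_label_def c_plus_bar_def c_plus_eq)
  then show False
  proof cases
    case 1
    show False
    proof (rule fundamental_no_self_overlap[OF c_fundamental r])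
      show "c ! (r + t) = c ! t" if "t < length c - r" for t
        using block_wrap[OF not_dvd, of t] that 1 by (simp add: r_def)
    qed
  next
    case 2
    show False
    proof (rule fundamental_no_bar_plus_overlap[OF c_fundamental r])
      fix t assume "t < length c - r"
      then have "t < j - L mod j" "r + t < j"
        by (simp_all add: r_def)
      with block_wrap[OF not_dvd, of t] 2 A_le_M[of "r + t"]
      show "word_plus c ! (r + t) = M - c ! t"
        by (simp add: r_def c_plus_bar_def nth_word_bar c_plus_nth flip: c_plus_eq)
    qed
  qed
qed

definition "k = L div j"

lemma L_eq: "L = k * j"
  using j_dvd_L by (simp add: k_def)

lemma block_add_k: "block (m + k) = block m"
proof -
  have "(m + k) * j = m * j + L"
    by (simp add: L_eq algebra_simps)
  moreover have "shift (n + L) A = shift n A" for n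
    using A_add_L by (simp add: fun_eq_iff shift_def add.assoc[symmetric])
  ultimately show ?thesis
    by (simp add: block_def)
qed

lemma not_at_A_k: "\<not> at_A k"
  using block_eq_c_plus[of k] block_add_k[of 0] block_0 by simp

lemma k_ge_2: "2 \<le> k"
proof -
  have "L \<noteq> 0"
    using a_ne by (simp add: L_def)
  then have "k \<noteq> 0"
    using L_eq by auto
  moreover have "k \<noteq> 1"
    using not_at_A_k label_0 by (auto simp: label_def)
  ultimately show ?thesis by linarith
qed

lemma at_A_add_k: "at_A (m + k) = at_A m"
  by (induction m) (simp_all add: not_at_A_k block_add_k)

lemma label_add_k: "label (m + k) = label m"
  using at_A_add_k[of "Suc m"] by (simp add: label_def)

lemma label_mod_k: "label m = label (m mod k)"
proof (induction m rule: less_induct)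
  case (less m)
  show ?case
  proof (cases "m < k")
    case False
    then have "label m = label (m - k)"
      using label_add_k[of "m - k"] by simp
    also have "\<dots> = label (m mod k)"
      using less[of "m - k"] False k_ge_2 by (simp add: le_mod_geq)
    finally show ?thesis .
  qed simp
qed

lemma not_label_k_minus_1: "\<not> label (k - 1)"
  using not_at_A_k k_ge_2 by (simp add: label_def)

definition "D = bit_seq label"

definition "d = map D [0..<k]"

lemma per_d: "per d = D"
proof
  fix i
  have "i mod k < k"
    using k_ge_2 by simp
  then show "per d i = D i"
    using label_mod_k[of i] by (simp add: per_def d_def D_def bit_seq_def)
qed

lemma comp_aux_blocks:
  "comp_aux M c (at_A m) (map D [m..<m + n]) = concat (map block [m..<m + n])"
proof (induction n arbitrary: m)
  case (Suc n)
  have upt: "[m..<m + Suc n] = m # [Suc m..<Suc m + n]"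
    by (simp add: upt_conv_Cons)
  moreover have "(D m \<noteq> 0) = label m"
    by (simp add: D_def bit_seq_def)
  ultimately have "comp_aux M c (at_A m) (map D [m..<m + Suc n])
      = edge_label M c (at_A m) (label m) @
        comp_aux M c (at_A (Suc m)) (map D [Suc m..<Suc m + n])"
    by (simp only: list.map comp_aux_Cons label_def)
  also have "\<dots> = block m @ concat (map block [Suc m..<Suc m + n])"
    by (simp only: Suc.IH flip: block_eq_edge_label)
  also have "\<dots> = concat (map block [m..<m + Suc n])"
    by (simp only: upt list.map concat.simps)
  finally show ?case .
qed simp

lemma concat_blocks: "concat (map block [0..<n]) = map A [0..<n * j]"
proof (induction n)
  case (Suc n)
  have "block n = map A [n * j..<n * j + j]"
    by (intro nth_equalityI) (simp_all add: block_nth)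
  moreover have "[0..<Suc n * j] = [0..<n * j] @ [n * j..<n * j + j]"
    using upt_add_eq_append[of 0 "n * j" j] by (simp add: add.commute)
  ultimately show ?case
    using Suc by simp
qed simp

lemma a_eq_compose: "a = compose M c d"
proof -
  have "tl d = map D [1..<1 + (k - 1)]"
    using k_ge_2 by (simp add: d_def map_tl[symmetric])
  then have "comp_aux M c True (tl d) = concat (map block [1..<1 + (k - 1)])"
    using comp_aux_blocks[of 1 "k - 1"] label_0 by (simp add: label_def)
  then have "compose M c d = concat (map block [0..<k])"
    using k_ge_2 block_0 c_plus_eq by (simp add: compose_def upt_conv_Cons)
  also have "\<dots> = map A [0..<L]"
    using concat_blocks[of k] L_eq by simp
  also have "\<dots> = a"
    by (intro nth_equalityI) (simp_all add: A_def per_def L_def)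
  finally show ?thesis by simp
qed

lemma shift_A_eq_Phi_inv: "shift (m * j) A = Phi_inv M c (at_A m) (\<lambda>t. label (t + m))"
  using shift_Phi_inv[OF c_ne, of m M False label] A_eq_Phi_inv by (simp add: vertex_at_label)

lemma shift_Suc_A_eq_Phi_inv: "shift (Suc m * j) A = Phi_inv M c (label m) (\<lambda>t. label (t + Suc m))"
  using shift_A_eq_Phi_inv[of "Suc m"] by (simp only: label_def)

lemma shift_k_D: "shift k D = D"
  by (simp add: D_def shift_bit_seq label_add_k)

lemma shift_one_D_less: "seq_less (shift 1 D) D"
proof -
  have ex: "\<exists>r. \<not> label r"
    using not_label_k_minus_1 by blast
  define r where "r = (LEAST r. \<not> label r)"
  have r: "\<not> label r" and before: "\<And>t. t < r \<Longrightarrow> label t"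
    unfolding r_def using LeastI_ex[OF ex] not_less_Least by auto
  with label_0 have "0 < r"
    by (cases r) auto
  then have "agree (r - 1) (shift 1 D) D" "shift 1 D (r - 1) < D (r - 1)"
    using r before by (auto simp: agree_def shift_def D_def bit_seq_def)
  then show ?thesis
    by (auto simp: seq_less_iff_agree)
qed

lemma shift_D_le: "seq_le (shift i D) D"
proof (induction i)
  case (Suc i)
  show ?case
  proof (cases "label i")
    case True
    with label_0 have "agree 1 (shift i D) D"
      by (simp add: agree_def shift_def D_def bit_seq_def)
    with Suc.IH have "seq_le (shift (Suc i) D) (shift 1 D)"
      using agree_imp_shift_le_iff by fastforce
    with shift_one_D_less show ?thesis
      by (simp add: seq_le_def) (metis seq_less_trans)
  next
    case False
    then have "seq_le (Phi_inv M c False (\<lambda>t. label (t + Suc i))) (Phi_inv M c False label)"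
      using shift_A_le[of "Suc i * j"] shift_Suc_A_eq_Phi_inv[of i] A_eq_Phi_inv
      by simp
    then show ?thesis
      using Phi_inv_le_imp_bit_seq_le[OF c_ne last_c_less] by (simp add: D_def shift_bit_seq)
  qed
qed (simp add: seq_le_refl)

lemma D_le_1: "D i \<le> 1"
  by (simp add: D_def bit_seq_def)

lemma seq_bar_D_le_shift: "seq_le (seq_bar 1 D) (shift i D)"
proof (induction i)
  case 0
  have "seq_less (seq_bar 1 D) D"
    using label_0 unfolding seq_less_iff_agree
    by (intro exI[of _ 0]) (simp add: agree_def seq_bar_def D_def bit_seq_def)
  then show ?case
    by (simp add: seq_le_def)
next
  case (Suc i)
  show ?case
  proof (cases "label i")
    case True
    have "seq_le (seq_bar M (Phi_inv M c False label)) (Phi_inv M c True (\<lambda>t. label (t + Suc i)))"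
      using seq_bar_A_le_shift[of "Suc i * j"] shift_Suc_A_eq_Phi_inv[of i] A_eq_Phi_inv True
      by simp
    then have "seq_le (Phi_inv M c True (\<lambda>t. \<not> label t))
        (Phi_inv M c True (\<lambda>t. label (t + Suc i)))"
      using seq_bar_Phi_inv[OF c_ne last_c_less c_le_M] by simp
    then have "seq_le (bit_seq (\<lambda>t. \<not> label t)) (bit_seq (\<lambda>t. label (t + Suc i)))"
      by (rule Phi_inv_le_imp_bit_seq_le[OF c_ne last_c_less])
    then show ?thesis
      by (simp add: D_def shift_bit_seq bit_seq_Not)
  next
    case False
    then have "agree 1 (seq_bar 1 D) (shift i D)"
      using label_0 by (simp add: agree_def seq_bar_def shift_def D_def bit_seq_def)
    with Suc.IH have "seq_le (seq_bar 1 (shift 1 D)) (shift (Suc i) D)"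
      using agree_imp_shift_le_iff by (fastforce simp: shift_seq_bar)
    moreover have "seq_le (seq_bar 1 D) (seq_bar 1 (shift 1 D))"
      using seq_bar_le[OF D_le_1] shift_one_D_less by (simp add: seq_le_def)
    ultimately show ?thesis
      using seq_le_trans by blast
  qed
qed

(* A smaller period p of the labels would give label (p - 1) = label (k - 1) = False, so the path
   would be back at B after p blocks and A would have the period p * j < L. *)
lemma shift_D_ne:
  assumes h: "0 < h" "h < k"
  shows "shift h D \<noteq> D"
proof
  assume "shift h D = D"
  with shift_k_D h(1) obtain p where p: "0 < p" "p \<le> h" "shift p D = D" "p dvd k"
    by (rule least_period_dvd)
  from \<open>p dvd k\<close> obtain q where "k = p * q"
    by (rule dvdE)
  with p(1) k_ge_2 have "k - 1 = p - 1 + (q - 1) * p"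
    by (cases q) (simp_all add: algebra_simps)
  then have "(k - 1) mod p = (p - 1) mod p"
    by (simp only: mod_mult_self1)
  with p(1) have "(k - 1) mod p = p - 1"
    by simp
  then have "D (p - 1) = D (k - 1)"
    using fun_cong[OF shift_period_mod[OF p(3), of "k - 1"], of 0] by (simp add: shift_def)
  then have "\<not> at_A p"
    using not_label_k_minus_1 p(1) by (cases p) (simp_all add: D_def bit_seq_def label_def split: if_splits)
  moreover have "(\<lambda>t. label (t + p)) = label"
    using p(3) by (intro bit_seq_inject) (simp add: D_def shift_bit_seq)
  ultimately have "shift (p * j) A = A"
    using shift_A_eq_Phi_inv[of p] A_eq_Phi_inv by simp
  moreover have "(p * j) mod L \<noteq> 0"
    using p(1,2) h(2) j_pos L_eq by simp
  ultimately show False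
    using shift_A_less[of "p * j"] seq_less_irrefl by simp
qed

lemma shift_D_not_agree:
  assumes i: "1 \<le> i" "i < k"
  shows "\<not> agree (k - i) (shift i D) D"
proof
  assume "agree (k - i) (shift i D) D"
  then have "seq_le (shift (k - i) (shift i D)) (shift (k - i) D)"
    using agree_imp_shift_le_iff shift_D_le by blast
  moreover have "shift (k - i) (shift i D) = D"
    using i shift_k_D by simp
  ultimately have "shift (k - i) D = D"
    using shift_D_le seq_le_antisym by metis
  with i show False
    using shift_D_ne[of "k - i"] by simp
qed

lemma d_fundamental: "fundamental 1 d"
proof -
  have "length d = k"
    by (simp add: d_def)
  moreover have "\<forall>x\<in>set d. x \<le> 1"
    using D_le_1 by (auto simp: d_def)
  moreover have "prefix_less (k - i) (shift i D) D" if "1 \<le> i" "i < k" for i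
    using seq_le_imp_prefix_le[OF shift_D_le, of "k - i" i] shift_D_not_agree[OF that]
    unfolding prefix_le_def by blast
  ultimately show ?thesis
    using k_ge_2 seq_le_imp_prefix_le[OF seq_bar_D_le_shift]
    by (simp add: fundamental_long_iff per_d)
qed

theorem reducible: "\<exists>c d. fundamental M c \<and> fundamental 1 d \<and> a = compose M c d"
  using c_fundamental d_fundamental a_eq_compose by blast

end

lemma word_plus_word_bar:
  assumes "u \<noteq> []" "0 < last u" "\<forall>x\<in>set u. x \<le> M"
  shows "word_plus (word_bar M u) = word_bar M (word_minus u)"
proof -
  have "u ! (length u - 1) \<le> M"
    using assms(1,3) nth_mem[of "length u - 1" u] by simp
  with assms show ?thesis
    by (intro nth_equalityI)
      (auto simp: nth_word_plus nth_word_minus nth_word_bar last_conv_nth Suc_diff_le)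
qed

lemma violation_if_not_irreducible_seq:
  assumes fund: "fundamental M a" and not_irr: "\<not> irreducible_seq M (per a)"
  obtains j where "irreducibility_violation M a j"
proof -
  from not_irr per_fundamental_in_V[OF fund] obtain j where j: "1 \<le> j" "0 < per a (j - 1)"
    and V: "in_V M (per (word_minus (pref (per a) j)))"
    and not_less: "\<not> seq_less
      (prepend (pref (per a) j) (per (word_plus (word_bar M (pref (per a) j))))) (per a)"
    unfolding irreducible_seq_def by blast
  have "length (pref (per a) j) = j"
    by simp
  with j(1) have ne: "pref (per a) j \<noteq> []"
    by (metis list.size(3) not_one_le_zero)
  with j have "0 < last (pref (per a) j)"
    by (simp add: last_conv_nth)
  moreover have "\<forall>x\<in>set (pref (per a) j). x \<le> M"
    using per_fundamental_le[OF fund] by (auto simp: pref_def)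
  ultimately have "word_plus (word_bar M (pref (per a) j)) = word_bar M (word_minus (pref (per a) j))"
    using ne by (rule word_plus_word_bar[rotated])
  with not_less
  have "seq_le (per a) (prepend (pref (per a) j) (per (word_bar M (word_minus (pref (per a) j)))))"
    by (simp add: not_seq_less_iff_seq_le)
  with fund j V have "irreducibility_violation M a j"
    by unfold_locales simp_all
  then show ?thesis ..
qed

theorem proposition2p19:
  fixes M :: nat and a :: "nat list"
  assumes "M \<ge> 1" and "fundamental M a"
  shows "irreducible_seq M (per a) \<longleftrightarrow> irreducible_word M a"
proof
  assume "irreducible_seq M (per a)"
  with assms(2) show "irreducible_word M a"
    using compose_not_irreducible_seq unfolding irreducible_word_def by blast
next
  assume irr: "irreducible_word M a"
  show "irreducible_seq M (per a)"
  proof (rule ccontr)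
    assume "\<not> irreducible_seq M (per a)"
    with assms(2) obtain j where "irreducibility_violation M a j"
      by (rule violation_if_not_irreducible_seq)
    with irr show False
      using irreducibility_violation.reducible unfolding irreducible_word_def by blast
  qed
qed

end
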